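(* Let $N=[n]$, let $v:2^N\to\mathbb{R}_+$ be a monotone submodular valuation with $v(\emptyset)=0$, and let $X$ be a decision map for $v$. Then for any pure Nash equilibrium $p$ of the pricing game defined by $v$ and $X$, we have $p_i\ge v(\{i\}\mid N\setminus\{i\})$ for every $i\in N$. Moreover, if $S=X(p)$ and $i\notin S$, then $v(\{i\}\mid S)=0$.
   Context: Pricing game: $N=[n]$ services, service $i$ controlled by seller $i$. Buyer valuation $v:2^N\to\mathbb{R}_+$, monotone, $v(\emptyset)=0$; submodular means $v(S\cup T)+v(S\cap T)\le v(S)+v(T)$ for all $S,T$. Marginal value: $v(T\mid S)=v(S\cup T)-v(S)$. For $p\in\mathbb{R}^n_+$, $p(S)=\sum_{j\in S}p_j$, $D(v;p)=\arg\max_{S\subseteq N}(v(S)-p(S))$. A decision map is $X:\mathbb{R}^n_+\to2^N$ with $X(p)\in D(v;p)$ for all $p$. Seller $i$'s utility is $u_i(p)=p_i\mathbf{1}\{i\in X(p)\}$; a pure Nash equilibrium is a $p$ with $u_i(p)\ge u_i(p_i',p_{-i})$ for all $i$ and $p_i'\in\mathbb{R}_+$. *)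

theory Defs
  imports Complex_Main
begin

definition price_vectors :: "nat \<Rightarrow> (nat \<Rightarrow> real) set" where
  "price_vectors n = {p. (\<forall>i\<in>{1..n}. 0 \<le> p i) \<and> (\<forall>i. i \<notin> {1..n} \<longrightarrow> p i = 0)}"

definition valuation :: "nat \<Rightarrow> (nat set \<Rightarrow> real) \<Rightarrow> bool" where
  "valuation n v \<longleftrightarrow> v {} = 0 \<and> (\<forall>S. S \<subseteq> {1..n} \<longrightarrow> 0 \<le> v S)
     \<and> (\<forall>S T. S \<subseteq> T \<and> T \<subseteq> {1..n} \<longrightarrow> v S \<le> v T)"

definition submodular :: "nat \<Rightarrow> (nat set \<Rightarrow> real) \<Rightarrow> bool" where
  "submodular n v \<longleftrightarrow> (\<forall>S T. S \<subseteq> {1..n} \<and> T \<subseteq> {1..n} \<longrightarrow>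
      v (S \<union> T) + v (S \<inter> T) \<le> v S + v T)"

definition marginal :: "(nat set \<Rightarrow> real) \<Rightarrow> nat set \<Rightarrow> nat set \<Rightarrow> real" where
  "marginal v T S = v (S \<union> T) - v S"

definition price_of :: "(nat \<Rightarrow> real) \<Rightarrow> nat set \<Rightarrow> real" where
  "price_of p S = (\<Sum>j\<in>S. p j)"

definition demand :: "nat \<Rightarrow> (nat set \<Rightarrow> real) \<Rightarrow> (nat \<Rightarrow> real) \<Rightarrow> nat set set" where
  "demand n v p = {S. S \<subseteq> {1..n} \<and>
      (\<forall>T. T \<subseteq> {1..n} \<longrightarrow> v T - price_of p T \<le> v S - price_of p S)}"

definition decision_map :: "nat \<Rightarrow> (nat set \<Rightarrow> real) \<Rightarrow> ((nat \<Rightarrow> real) \<Rightarrow> nat set) \<Rightarrow> bool" where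
  "decision_map n v X \<longleftrightarrow> (\<forall>p\<in>price_vectors n. X p \<in> demand n v p)"

definition seller_utility :: "((nat \<Rightarrow> real) \<Rightarrow> nat set) \<Rightarrow> nat \<Rightarrow> (nat \<Rightarrow> real) \<Rightarrow> real" where
  "seller_utility X i p = (if i \<in> X p then p i else 0)"

definition pure_NE :: "nat \<Rightarrow> ((nat \<Rightarrow> real) \<Rightarrow> nat set) \<Rightarrow> (nat \<Rightarrow> real) \<Rightarrow> bool" where
  "pure_NE n X p \<longleftrightarrow> p \<in> price_vectors n \<and>
     (\<forall>i\<in>{1..n}. \<forall>q::real. 0 \<le> q \<longrightarrow> seller_utility X i p \<ge> seller_utility X i (p(i := q)))"

end

theory Submission
  imports Defs
begin

text \<open>Both claims follow from one deviation argument: if seller \<open>i\<close> moved its price to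
  some \<open>q\<close> strictly below the relevant marginal value, every demanded set would have to
  contain \<open>i\<close>, so the deviation earns \<open>q\<close>. For the first claim, submodularity makes
  \<open>v({i} | N - {i})\<close> the smallest marginal of \<open>i\<close>, so \<open>q\<close> can be chosen above \<open>p\<^sub>i\<close>;
  for the second, \<open>i\<close> earns nothing at \<open>p\<close>, so any positive \<open>q\<close> is a profitable
  deviation unless \<open>v({i} | S) = 0\<close>.\<close>

lemma price_of_insert:
  assumes "finite D" "i \<notin> D"
  shows "price_of p (insert i D) = p i + price_of p D"
  using assms by (simp add: price_of_def)

lemma price_of_update_notin:
  assumes "i \<notin> D"
  shows "price_of (p(i := x)) D = price_of p D"
  unfolding price_of_def using assms by (intro sum.cong) auto

lemma price_vectors_update:
  assumes "p \<in> price_vectors n" "i \<in> {1..n}" "0 \<le> x"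
  shows "p(i := x) \<in> price_vectors n"
  using assms by (auto simp: price_vectors_def)

lemma submodularD:
  assumes "submodular n v" "S \<subseteq> {1..n}" "T \<subseteq> {1..n}"
  shows "v (S \<union> T) + v (S \<inter> T) \<le> v S + v T"
  using assms by (simp add: submodular_def)

lemma valuation_mono:
  assumes "valuation n v" "S \<subseteq> T" "T \<subseteq> {1..n}"
  shows "v S \<le> v T"
  using assms by (simp add: valuation_def)

lemma demand_subset:
  assumes "D \<in> demand n v p"
  shows "D \<subseteq> {1..n}"
  using assms by (simp add: demand_def)

lemma marginal_nonneg:
  assumes "valuation n v" "S \<subseteq> {1..n}" "i \<in> {1..n}"
  shows "0 \<le> marginal v {i} S"
proof -
  have "v S \<le> v (S \<union> {i})" using assms(2,3) by (intro valuation_mono[OF assms(1)]) auto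
  then show ?thesis by (simp add: marginal_def)
qed

lemma submodular_marginal_antimono:
  assumes "submodular n v" "S \<subseteq> T" "T \<subseteq> {1..n}" "i \<in> {1..n}" "i \<notin> T"
  shows "marginal v {i} T \<le> marginal v {i} S"
proof -
  have "v ((S \<union> {i}) \<union> T) + v ((S \<union> {i}) \<inter> T) \<le> v (S \<union> {i}) + v T"
    using assms(2-4) by (intro submodularD[OF assms(1)]) auto
  moreover have "(S \<union> {i}) \<union> T = T \<union> {i}" "(S \<union> {i}) \<inter> T = S"
    using assms(2,5) by auto
  ultimately show ?thesis by (simp add: marginal_def)
qed

lemma demand_marginal_le_price:
  assumes "D \<in> demand n v p" "i \<in> {1..n}" "i \<notin> D"
  shows "marginal v {i} D \<le> p i"
proof -
  have D: "D \<subseteq> {1..n}" using assms(1) by (rule demand_subset)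
  then have "v (insert i D) - price_of p (insert i D) \<le> v D - price_of p D"
    using assms(1,2) by (simp add: demand_def)
  moreover have "price_of p (insert i D) = p i + price_of p D"
    using finite_subset[OF D finite_atLeastAtMost] assms(3) by (rule price_of_insert)
  ultimately show ?thesis by (simp add: marginal_def)
qed

lemma demand_contains_if_price_below_last_marginal:
  assumes "submodular n v" "D \<in> demand n v p" "i \<in> {1..n}"
    and "p i < marginal v {i} ({1..n} - {i})"
  shows "i \<in> D"
proof (rule ccontr)
  assume i: "i \<notin> D"
  have "marginal v {i} ({1..n} - {i}) \<le> marginal v {i} D"
    using assms(1,3) i demand_subset[OF assms(2)] by (intro submodular_marginal_antimono) auto
  with demand_marginal_le_price[OF assms(2,3) i] assms(4) show False by simp
qed

text \<open>Lowering \<open>p\<^sub>i\<close> below \<open>v({i} | S)\<close> for a demanded \<open>S\<close> with \<open>i \<notin> S\<close> makes \<open>S \<union> {i}\<close> strictly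
  better than every set avoiding \<open>i\<close>, since prices away from \<open>i\<close> are unchanged.\<close>

lemma demand_contains_after_price_cut:
  assumes "S \<in> demand n v p" "i \<in> {1..n}" "i \<notin> S"
    and "D \<in> demand n v (p(i := x))" "x < marginal v {i} S"
  shows "i \<in> D"
proof (rule ccontr)
  assume i: "i \<notin> D"
  have S: "S \<subseteq> {1..n}" using assms(1) by (rule demand_subset)
  have "v D - price_of p D \<le> v S - price_of p S"
    using assms(1) demand_subset[OF assms(4)] by (simp add: demand_def)
  moreover have "v (insert i S) - price_of (p(i := x)) (insert i S)
      \<le> v D - price_of (p(i := x)) D"
    using assms(2,4) S by (simp add: demand_def)
  moreover have "price_of (p(i := x)) (insert i S) = x + price_of p S"
    using finite_subset[OF S finite_atLeastAtMost] assms(3) by (simp add: price_of_insert price_of_update_notin)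
  ultimately show False
    using assms(5) i by (simp add: price_of_update_notin marginal_def)
qed

lemma pure_NE_deviation_payoff_le:
  assumes "pure_NE n X p" "i \<in> {1..n}" "0 \<le> q" "i \<in> X (p(i := q))"
  shows "q \<le> seller_utility X i p"
proof -
  have "seller_utility X i (p(i := q)) \<le> seller_utility X i p"
    using assms(1-3) by (simp add: pure_NE_def)
  then show ?thesis using assms(4) by (simp add: seller_utility_def)
qed

theorem mainTheorem5:
  fixes n :: nat and v :: "nat set \<Rightarrow> real" and X :: "(nat \<Rightarrow> real) \<Rightarrow> nat set"
    and p :: "nat \<Rightarrow> real"
  assumes "valuation n v" and "submodular n v" and "decision_map n v X"
    and "pure_NE n X p"
  shows "(\<forall>i\<in>{1..n}. p i \<ge> marginal v {i} ({1..n} - {i}))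
       \<and> (\<forall>i\<in>{1..n}. i \<notin> X p \<longrightarrow> marginal v {i} (X p) = 0)"
proof (intro conjI ballI impI)
  have p: "p \<in> price_vectors n" using assms(4) by (simp add: pure_NE_def)
  have demanded: "X (p(i := q)) \<in> demand n v (p(i := q))" if "i \<in> {1..n}" "0 \<le> q" for i q
    using assms(3) price_vectors_update[OF p that] by (simp add: decision_map_def)
  fix i assume i: "i \<in> {1..n}"
  have p_i: "0 \<le> p i" using p i by (simp add: price_vectors_def)
  show "marginal v {i} ({1..n} - {i}) \<le> p i"
  proof (rule ccontr)
    assume "\<not> ?thesis"
    then have "p i < marginal v {i} ({1..n} - {i})" by simp
    then obtain q where q: "p i < q" "q < marginal v {i} ({1..n} - {i})"
      using dense by blast
    have q0: "0 \<le> q" using p_i q(1) by simp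
    have "i \<in> X (p(i := q))"
      using demand_contains_if_price_below_last_marginal[OF assms(2) demanded[OF i q0] i] q(2) by simp
    then have "q \<le> seller_utility X i p" by (rule pure_NE_deviation_payoff_le[OF assms(4) i q0])
    then show False using q p_i by (simp add: seller_utility_def split: if_splits)
  qed
  assume not_sold: "i \<notin> X p"
  have S: "X p \<in> demand n v p" using assms(3) p by (simp add: decision_map_def)
  show "marginal v {i} (X p) = 0"
  proof (rule ccontr)
    assume "marginal v {i} (X p) \<noteq> 0"
    with marginal_nonneg[OF assms(1) demand_subset[OF S] i]
    have "0 < marginal v {i} (X p)" by simp
    then obtain q where q: "0 < q" "q < marginal v {i} (X p)"
      using dense by blast
    have q0: "0 \<le> q" using q(1) by simp
    have "i \<in> X (p(i := q))"
      using demand_contains_after_price_cut[OF S i not_sold demanded[OF i q0]] q(2) by simp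
    then have "q \<le> seller_utility X i p" by (rule pure_NE_deviation_payoff_le[OF assms(4) i q0])
    then show False using q not_sold by (simp add: seller_utility_def)
  qed
qed

end
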